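(* Let $b>1$, $p\ge1$, $R\subseteq\{0,\ldots,p-1\}$ with $(p,R)$ proper. Let $k$ be the greatest divisor of $p$ coprime with $b$ and $d=p/k$. Then for all distinct integers $i,i'$ with $0\le i,i'<k$, the states $id$ and $i'd$ of $\mathcal{A}_{R,p}$ are not Nerode-equivalent.
   Context: $A_b=\{0,\ldots,b-1\}$. $\mathcal{A}_{R,p}$: complete deterministic automaton over $A_b$ with states $\{0,\ldots,p-1\}$, initial $0$, final states $R$, transitions $n\xrightarrow{a}(nb+a)\bmod p$. $(p,R)$ is proper if $p$ is the smallest period of $R+p\mathbb{N}$, i.e. there are no $1\le p'<p$, $R'\subseteq\{0,\ldots,p'-1\}$ with $R+p\mathbb{N}=R'+p'\mathbb{N}$. Two states $s,s'$ are Nerode-equivalent if for every word $u$, $s\cdot u$ is final iff $s'\cdot u$ is final ($s\cdot u$ = state reached from $s$ reading $u$). *)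

theory Defs
  imports Main "HOL-Computational_Algebra.Primes"
begin

definition trans_st :: "nat \<Rightarrow> nat \<Rightarrow> nat \<Rightarrow> nat \<Rightarrow> nat" where
  "trans_st b p n a = (n * b + a) mod p"

definition run_st :: "nat \<Rightarrow> nat \<Rightarrow> nat \<Rightarrow> nat list \<Rightarrow> nat" where
  "run_st b p s u = foldl (trans_st b p) s u"

definition per_set :: "nat set \<Rightarrow> nat \<Rightarrow> nat set" where
  "per_set R p = {r + p * m | r m. r \<in> R}"

definition proper :: "nat \<Rightarrow> nat set \<Rightarrow> bool" where
  "proper p R \<longleftrightarrow> \<not> (\<exists>p' R'. 1 \<le> p' \<and> p' < p \<and> R' \<subseteq> {0..<p'} \<and>
       per_set R p = per_set R' p')"

definition nerode_equiv :: "nat \<Rightarrow> nat \<Rightarrow> nat set \<Rightarrow> nat \<Rightarrow> nat \<Rightarrow> bool" where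
  "nerode_equiv b p R s s' \<longleftrightarrow>
     (\<forall>u. set u \<subseteq> {0..<b} \<longrightarrow> (run_st b p s u \<in> R \<longleftrightarrow> run_st b p s' u \<in> R))"

end

theory Submission
  imports Defs "HOL-Number_Theory.Number_Theory"
begin

text \<open>
  Since k is coprime to b, a suitable power b^n is 1 modulo k, so each state i*d is fixed by
  multiplication with b^n modulo p = k*d. Reading the n-digit base-b expansion of x from a
  fixed state s therefore leads to the state (s + x) mod p. If i*d < i'*d were Nerode-equivalent,
  membership of y mod p in R would thus be invariant under the shift by t = (i' - i)*d, and
  hence, by Bezout, under the shift by gcd t p < p, contradicting properness of (p, R).
\<close>

fun digits :: "nat \<Rightarrow> nat \<Rightarrow> nat \<Rightarrow> nat list" where
  "digits b 0 v = []"
| "digits b (Suc n) v = digits b n (v div b) @ [v mod b]"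

lemma digits_subset: "b > 0 \<Longrightarrow> set (digits b n v) \<subseteq> {0..<b}"
  by (induction n arbitrary: v) auto

lemma run_st_digits:
  assumes "s < p" "v < b ^ n"
  shows "run_st b p s (digits b n v) = (s * b ^ n + v) mod p"
  using assms(2)
proof (induction n arbitrary: v)
  case 0
  then show ?case using assms(1) by (simp add: run_st_def)
next
  case (Suc n)
  have "v div b < b ^ n"
    using Suc.prems by (intro less_mult_imp_div_less) (simp add: mult.commute)
  then have IH: "run_st b p s (digits b n (v div b)) = (s * b ^ n + v div b) mod p"
    by (rule Suc.IH)
  have "run_st b p s (digits b (Suc n) v) = ((s * b ^ n + v div b) mod p * b + v mod b) mod p"
    by (simp add: run_st_def trans_st_def flip: IH)
  also have "\<dots> = ((s * b ^ n + v div b) * b + v mod b) mod p"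
    by (metis mod_add_left_eq mod_mult_left_eq)
  also have "(s * b ^ n + v div b) * b + v mod b = s * b ^ Suc n + v"
    by (simp add: algebra_simps)
  finally show ?case .
qed

lemma nerode_equiv_sym: "nerode_equiv b p R s s' = nerode_equiv b p R s' s"
  unfolding nerode_equiv_def by blast

lemma nerode_equiv_imp_translate:
  assumes "b > 0" "s < p" "s' < p" "p \<le> b ^ n"
    and "s * b ^ n mod p = s" "s' * b ^ n mod p = s'"
    and "nerode_equiv b p R s s'"
  shows "(s + x) mod p \<in> R \<longleftrightarrow> (s' + x) mod p \<in> R"
proof -
  have x: "x mod p < b ^ n"
    using mod_less_divisor[of p x] assms(2,4) by linarith
  have run: "run_st b p q (digits b n (x mod p)) = (q + x) mod p"
    if "q * b ^ n mod p = q" "q < p" for q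
  proof -
    have "run_st b p q (digits b n (x mod p)) = (q * b ^ n + x mod p) mod p"
      by (rule run_st_digits[OF that(2) x])
    also have "\<dots> = (q * b ^ n mod p + x) mod p"
      by (simp add: mod_add_right_eq mod_add_left_eq)
    finally show ?thesis
      using that(1) by simp
  qed
  have "run_st b p s (digits b n (x mod p)) \<in> R \<longleftrightarrow> run_st b p s' (digits b n (x mod p)) \<in> R"
    using assms(7) digits_subset[OF assms(1)] unfolding nerode_equiv_def by blast
  then show ?thesis
    using run assms(2,3,5,6) by simp
qed

lemma translate_imp_shift_invariant:
  fixes s s' p :: nat
  assumes "\<And>x. (s + x) mod p \<in> R \<longleftrightarrow> (s' + x) mod p \<in> R" "s \<le> s'" "s < p"
  shows "(y + (s' - s)) mod p \<in> R \<longleftrightarrow> y mod p \<in> R"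
proof -
  have "s + (y + (p - s)) = y + p"
    using assms(3) by simp
  then have "y mod p = (s + (y + (p - s))) mod p"
    by simp
  moreover have "(y + (s' - s)) mod p = (s' + (y + (p - s))) mod p"
  proof -
    have "s' + (y + (p - s)) = (y + (s' - s)) + p"
      using assms(2,3) by simp
    then show ?thesis
      by (simp only: mod_add_self2)
  qed
  ultimately show ?thesis
    using assms(1) by simp
qed

lemma periodic_add_mult:
  fixes P :: "nat \<Rightarrow> bool"
  assumes "\<And>y. P (y + t) = P y"
  shows "P (y + m * t) = P y"
proof (induction m)
  case (Suc m)
  have "P (y + Suc m * t) = P ((y + m * t) + t)"
    by (simp add: algebra_simps)
  then show ?case
    using assms Suc.IH by simp
qed simp

lemma periodic_gcd:
  fixes P :: "nat \<Rightarrow> bool"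
  assumes "\<And>y. P (y + t) = P y" "\<And>y. P (y + p) = P y" "t \<noteq> 0"
  shows "P (y + gcd t p) = P y"
proof -
  obtain a c where bezout: "t * a = p * c + gcd t p"
    using bezout_nat[OF assms(3)] by blast
  have "P (y + gcd t p) = P (y + gcd t p + c * p)"
    using periodic_add_mult[of P p] assms(2) by simp
  also have "y + gcd t p + c * p = y + a * t"
    using bezout by (simp add: algebra_simps)
  also have "P (y + a * t) = P y"
    using periodic_add_mult[of P t] assms(1) by simp
  finally show ?thesis .
qed

lemma per_set_eq_mod:
  assumes "R \<subseteq> {0..<p}" "p > 0"
  shows "per_set R p = {n. n mod p \<in> R}"
proof
  show "per_set R p \<subseteq> {n. n mod p \<in> R}"
    using assms by (auto simp: per_set_def)
  show "{n. n mod p \<in> R} \<subseteq> per_set R p"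
  proof
    fix n assume "n \<in> {n. n mod p \<in> R}"
    moreover have "n = n mod p + p * (n div p)" by simp
    ultimately show "n \<in> per_set R p"
      unfolding per_set_def by blast
  qed
qed

lemma shift_invariant_imp_not_proper:
  assumes R: "R \<subseteq> {0..<p}" and t: "0 < t" "t < p"
    and shift: "\<And>y. (y + t) mod p \<in> R \<longleftrightarrow> y mod p \<in> R"
  shows "\<not> proper p R"
proof -
  define g where "g = gcd t p"
  have g: "0 < g" "g < p"
    using t le_less_trans[OF gcd_le1_nat[of t p]] unfolding g_def by simp_all
  have period: "(y + g) mod p \<in> R \<longleftrightarrow> y mod p \<in> R" for y
    using periodic_gcd[of "\<lambda>y. y mod p \<in> R" t p] shift t unfolding g_def by simp
  have reduce: "n mod p \<in> R \<longleftrightarrow> n mod g \<in> R" for n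
  proof -
    have "n mod p \<in> R \<longleftrightarrow> (n mod g + (n div g) * g) mod p \<in> R"
      by simp
    also have "\<dots> \<longleftrightarrow> n mod g mod p \<in> R"
      using periodic_add_mult[of "\<lambda>y. y mod p \<in> R" g] period by blast
    also have "n mod g mod p = n mod g"
      using g by (meson mod_less mod_less_divisor order.strict_trans)
    finally show ?thesis .
  qed
  define R' where "R' = {r \<in> R. r < g}"
  have "per_set R' g = {n. n mod g \<in> R'}"
    by (rule per_set_eq_mod) (use g in \<open>auto simp: R'_def\<close>)
  also have "\<dots> = per_set R p"
    using per_set_eq_mod[OF R] g reduce by (auto simp: R'_def)
  moreover have "R' \<subseteq> {0..<g}"
    by (auto simp: R'_def)
  ultimately have "1 \<le> g \<and> g < p \<and> R' \<subseteq> {0..<g} \<and> per_set R p = per_set R' g"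
    using g by simp
  then show ?thesis
    unfolding proper_def by blast
qed

lemma fixed_states_not_nerode_equiv:
  assumes "b > 1" "R \<subseteq> {0..<p}" "proper p R"
    and "s < s'" "s' < p" "p \<le> b ^ n"
    and "s * b ^ n mod p = s" "s' * b ^ n mod p = s'"
  shows "\<not> nerode_equiv b p R s s'"
proof
  assume "nerode_equiv b p R s s'"
  then have "(s + x) mod p \<in> R \<longleftrightarrow> (s' + x) mod p \<in> R" for x
    using assms by (intro nerode_equiv_imp_translate) auto
  then have "(y + (s' - s)) mod p \<in> R \<longleftrightarrow> y mod p \<in> R" for y
    using assms(4,5) by (intro translate_imp_shift_invariant) auto
  moreover have "0 < s' - s" "s' - s < p"
    using assms(4,5) by auto
  ultimately show False
    using shift_invariant_imp_not_proper[OF assms(2)] assms(3) by blast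
qed

lemma multiple_fixed_by_totient_power:
  assumes "coprime k b" "p = k * d" "i < k"
  shows "i * d * b ^ (totient k * m) mod p = i * d"
proof -
  have "[b ^ (totient k * m) = 1] (mod k)"
    using euler_theorem[OF assms(1)[unfolded coprime_commute[of k]]]
    by (metis cong_pow power_mult power_one)
  then have "i * b ^ (totient k * m) mod k = i"
    using cong_scalar_left[of _ 1 k i] assms(3) by (simp add: cong_def)
  then show ?thesis
    using assms(2) by (metis mod_mult_mult1 mult.assoc mult.commute)
qed

theorem lemma19:
  fixes b p k d :: nat and R :: "nat set"
  assumes "b > 1" and "p \<ge> 1" and "R \<subseteq> {0..<p}" and "proper p R"
    and "k = (GREATEST k. k dvd p \<and> coprime k b)"
    and "d = p div k"
  shows "\<forall>i i'. i < k \<and> i' < k \<and> i \<noteq> i' \<longrightarrow> \<not> nerode_equiv b p R (i * d) (i' * d)"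
proof -
  have k: "k dvd p" "coprime k b"
    unfolding assms(5) using GreatestI_nat[of "\<lambda>k. k dvd p \<and> coprime k b" 1 p] assms(2)
    by (auto simp: dvd_imp_le)
  then have p: "p = k * d" "k > 0" "d > 0"
    using assms(2,6) by (auto intro!: gr0I)
  define n where "n = totient k * p"
  have "p \<le> n"
    using p(2) totient_gt_0_iff[of k] unfolding n_def by (simp add: Suc_le_eq)
  also have "n < 2 ^ n" by (rule less_exp)
  also have "2 ^ n \<le> b ^ n" using assms(1) by (simp add: power_mono)
  finally have "p \<le> b ^ n" by simp
  then have "\<not> nerode_equiv b p R (i * d) (i' * d)" if "i < i'" "i' < k" for i i'
    using that p multiple_fixed_by_totient_power[OF k(2) p(1)] assms(1,3,4) unfolding n_def
    by (intro fixed_states_not_nerode_equiv) auto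
  then show ?thesis
    using nerode_equiv_sym[of b p R] by (auto elim!: linorder_neqE_nat)
qed

end
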